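(* Let $f$ be a real analytic function on an open neighborhood of $0\in\mathbb{R}^n$ with $f(0)=0$ and $f\not\equiv 0$. Then for every open neighborhood $\mathcal{U}$ of $0$ contained in the domain of $f$, \[ \int_{\mathcal{U}} \left|\frac{\nabla f}{f}\right|^n \, dV(x) = \infty. \] *)

theory Defs
  imports "HOL-Analysis.Analysis"
begin

definition monomial_at :: "('n::finite \<Rightarrow> nat) \<Rightarrow> real^'n \<Rightarrow> real^'n \<Rightarrow> real" where
  "monomial_at \<alpha> a x = (\<Prod>i\<in>UNIV. (x$i - a$i) ^ (\<alpha> i))"

text \<open>f is real analytic at a: on some neighbourhood of a, f is the sum of a
 convergent (absolutely, i.e. unconditionally) multivariate power series centred at a.\<close>
definition real_analytic_at :: "(real^'n::finite \<Rightarrow> real) \<Rightarrow> real^'n \<Rightarrow> bool" where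
  "real_analytic_at f a \<longleftrightarrow>
     (\<exists>r>0. \<exists>c :: ('n \<Rightarrow> nat) \<Rightarrow> real.
        \<forall>x\<in>ball a r. ((\<lambda>\<alpha>. c \<alpha> * monomial_at \<alpha> a x) has_sum f x) UNIV)"

definition real_analytic_on :: "(real^'n::finite \<Rightarrow> real) \<Rightarrow> (real^'n) set \<Rightarrow> bool" where
  "real_analytic_on f D \<longleftrightarrow> (\<forall>a\<in>D. real_analytic_at f a)"

definition grad :: "(real^'n::finite \<Rightarrow> real) \<Rightarrow> real^'n \<Rightarrow> real^'n" where
  "grad f x = (\<chi> i. frechet_derivative f (at x) (axis i 1))"

end

theory Submission
  imports Defs
begin

text \<open>
  Expand \<open>f\<close> at \<open>0\<close> into homogeneous polynomials \<open>P\<^sub>j\<close> and let \<open>P\<^sub>K\<close> be the lowest nonzero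
  one; \<open>K > 0\<close> because \<open>f 0 = 0\<close>. On the open cone where \<open>\<bar>P\<^sub>K x\<bar> > m \<parallel>x\<parallel>\<^sup>K\<close>, near \<open>0\<close>, the
  function \<open>f\<close> is comparable to \<open>\<parallel>x\<parallel>\<^sup>K\<close>, and by Euler's identity the radial derivative
  \<open>\<nabla>f(x) \<bullet> x\<close> is comparable to \<open>K P\<^sub>K x\<close>, hence to \<open>\<parallel>x\<parallel>\<^sup>K\<close> as well. So \<open>\<bar>\<nabla>f/f\<bar> \<ge> c / \<parallel>x\<parallel>\<close>
  there, and \<open>\<parallel>x\<parallel>\<^sup>-\<^sup>n\<close> is not integrable over a cone near the origin: dilation by \<open>2\<close>
  preserves the integral over the truncated cone, while adding a shell of positive measure.
\<close>

definition homogeneous_part :: "(('n::finite \<Rightarrow> nat) \<Rightarrow> real) \<Rightarrow> nat \<Rightarrow> real^'n \<Rightarrow> real" where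
  "homogeneous_part c j h = (\<Sum>\<alpha>\<in>{\<alpha>. sum \<alpha> UNIV = j}. c \<alpha> * monomial_at \<alpha> 0 h)"

definition homogeneous_coeff_norm :: "(('n::finite \<Rightarrow> nat) \<Rightarrow> real) \<Rightarrow> nat \<Rightarrow> real" where
  "homogeneous_coeff_norm c j = (\<Sum>\<alpha>\<in>{\<alpha>. sum \<alpha> UNIV = j}. \<bar>c \<alpha>\<bar>)"

lemma finite_multi_indices_of_degree: "finite {\<alpha>::'n::finite \<Rightarrow> nat. sum \<alpha> UNIV = j}"
proof -
  have "{\<alpha>::'n \<Rightarrow> nat. sum \<alpha> UNIV = j} \<subseteq> PiE UNIV (\<lambda>_. {..j})"
    by (auto simp: PiE_def Pi_def extensional_def intro!: member_le_sum)
  moreover have "finite (PiE (UNIV::'n set) (\<lambda>_. {..j}))" by (rule finite_PiE) auto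
  ultimately show ?thesis by (rule finite_subset)
qed

lemma monomial_at_shift: "monomial_at \<alpha> a (a + h) = monomial_at \<alpha> 0 h"
  by (simp add: monomial_at_def)

lemma monomial_at_scaleR: "monomial_at \<alpha> 0 (t *\<^sub>R h) = t ^ sum \<alpha> UNIV * monomial_at \<alpha> 0 h"
  by (simp add: monomial_at_def power_mult_distrib prod.distrib power_sum)

lemma monomial_at_const_vec: "monomial_at \<alpha> 0 (\<chi> i. t) = t ^ sum \<alpha> UNIV"
  by (simp add: monomial_at_def power_sum)

lemma abs_monomial_at_le: "\<bar>monomial_at \<alpha> 0 h\<bar> \<le> norm h ^ sum \<alpha> UNIV"
proof -
  have "\<bar>monomial_at \<alpha> 0 h\<bar> = (\<Prod>i\<in>UNIV. \<bar>h$i\<bar> ^ \<alpha> i)"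
    by (simp add: monomial_at_def abs_prod power_abs)
  also have "\<dots> \<le> (\<Prod>i\<in>UNIV. norm h ^ \<alpha> i)"
    by (intro prod_mono conjI power_mono) (auto simp: component_le_norm_cart)
  also have "\<dots> = norm h ^ sum \<alpha> UNIV" by (simp add: power_sum)
  finally show ?thesis .
qed

lemma monomial_at_degree_one:
  assumes "sum \<alpha> (UNIV::'n::finite set) = 1"
  obtains i where "\<And>h::real^'n. monomial_at \<alpha> 0 h = h$i"
proof -
  obtain i where i: "\<alpha> i \<noteq> 0" using assms by (metis sum.neutral zero_neq_one)
  have "sum \<alpha> UNIV = \<alpha> i + sum \<alpha> (UNIV - {i})" by (simp add: sum.remove)
  then have "\<alpha> i = 1" "sum \<alpha> (UNIV - {i}) = 0" using assms i by linarith+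
  then have "\<forall>k\<in>UNIV-{i}. \<alpha> k = 0" by simp
  then have "monomial_at \<alpha> 0 h = (h$i) ^ \<alpha> i" for h :: "real^'n"
    by (simp add: monomial_at_def prod.remove[of UNIV i])
  then show ?thesis using \<open>\<alpha> i = 1\<close> that by simp
qed

lemma homogeneous_part_scaleR: "homogeneous_part c j (t *\<^sub>R h) = t ^ j * homogeneous_part c j h"
  unfolding homogeneous_part_def by (simp add: monomial_at_scaleR sum_distrib_left mult_ac)

lemma homogeneous_coeff_norm_nonneg: "homogeneous_coeff_norm c j \<ge> 0"
  by (simp add: homogeneous_coeff_norm_def sum_nonneg)

lemma abs_homogeneous_part_le: "\<bar>homogeneous_part c j h\<bar> \<le> homogeneous_coeff_norm c j * norm h ^ j"
proof -
  have "\<bar>homogeneous_part c j h\<bar> \<le> (\<Sum>\<alpha>\<in>{\<alpha>. sum \<alpha> UNIV = j}. \<bar>c \<alpha>\<bar> * \<bar>monomial_at \<alpha> 0 h\<bar>)"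
    unfolding homogeneous_part_def by (rule order_trans[OF sum_abs]) (simp add: abs_mult)
  also have "\<dots> \<le> (\<Sum>\<alpha>\<in>{\<alpha>. sum \<alpha> UNIV = j}. \<bar>c \<alpha>\<bar> * norm h ^ j)"
    by (intro sum_mono mult_left_mono) (auto intro: order_trans[OF abs_monomial_at_le])
  finally show ?thesis by (simp add: homogeneous_coeff_norm_def sum_distrib_right)
qed

lemma homogeneous_part_zero: "j > 0 \<Longrightarrow> homogeneous_part c j 0 = 0"
  using abs_homogeneous_part_le[of c j 0] homogeneous_coeff_norm_nonneg[of c j]
  by (simp add: zero_power)

lemma homogeneous_part_degree_zero: "homogeneous_part c 0 h = homogeneous_part c 0 0"
  using homogeneous_part_scaleR[of c 0 0 h] by simp

lemma homogeneous_part_abs_const_vec: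
  "t \<ge> 0 \<Longrightarrow> homogeneous_part (\<lambda>\<alpha>. \<bar>c \<alpha>\<bar>) j (\<chi> i. t) = homogeneous_coeff_norm c j * t ^ j"
  unfolding homogeneous_part_def homogeneous_coeff_norm_def
  by (simp add: monomial_at_const_vec sum_distrib_right)

lemma continuous_on_homogeneous_part: "continuous_on UNIV (homogeneous_part c j)"
  unfolding homogeneous_part_def monomial_at_def by (intro continuous_intros)

lemma bounded_linear_homogeneous_part_one:
  fixes c :: "('n::finite \<Rightarrow> nat) \<Rightarrow> real"
  shows "bounded_linear (homogeneous_part c 1)"
proof -
  have "bounded_linear (\<lambda>h::real^'n. c \<alpha> * monomial_at \<alpha> 0 h)" if deg: "sum \<alpha> UNIV = 1" for \<alpha>
  proof -
    obtain i where i: "\<And>h::real^'n. monomial_at \<alpha> 0 h = h$i"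
      by (rule monomial_at_degree_one[OF deg]) blast
    have "bounded_linear (\<lambda>h::real^'n. c \<alpha> * h$i)"
      by (intro bounded_linear_mult_right[THEN bounded_linear_compose] bounded_linear_vec_nth)
    then show ?thesis by (simp add: i)
  qed
  then show ?thesis
    unfolding homogeneous_part_def[abs_def] by (intro bounded_linear_sum) auto
qed

lemma sums_homogeneous_parts:
  assumes "((\<lambda>\<alpha>. c \<alpha> * monomial_at \<alpha> 0 h) has_sum s) UNIV"
  shows "(\<lambda>j. homogeneous_part c j h) sums s"
proof -
  let ?B = "\<lambda>j. {\<alpha>::'n \<Rightarrow> nat. sum \<alpha> UNIV = j}"
  let ?F = "\<lambda>p. c (snd p) * monomial_at (snd p) 0 h"
  have bij: "bij_betw (\<lambda>\<alpha>. (sum \<alpha> UNIV, \<alpha>)) UNIV (Sigma UNIV ?B)"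
    by (rule bij_betwI[where g=snd]) auto
  have "(?F has_sum s) (Sigma UNIV ?B)"
    using assms has_sum_reindex_bij_betw[OF bij, of ?F s] by simp
  then have "((\<lambda>j. homogeneous_part c j h) has_sum s) UNIV"
  proof (rule has_sum_SigmaD)
    fix j :: nat
    show "((\<lambda>\<alpha>. ?F (j, \<alpha>)) has_sum homogeneous_part c j h) (?B j)"
      unfolding homogeneous_part_def using has_sum_finite[OF finite_multi_indices_of_degree] by simp
  qed
  then show ?thesis by (rule has_sum_imp_sums)
qed

lemma norm_const_vec_le: "t \<ge> 0 \<Longrightarrow> norm ((\<chi> i. t) :: real^'n::finite) \<le> t * CARD('n)"
  using norm_le_l1_cart[of "(\<chi> i. t) :: real^'n"] by (simp add: mult.commute)

lemma real_analytic_at_homogeneous_expansion: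
  fixes f :: "real^'n::finite \<Rightarrow> real"
  assumes "real_analytic_at f a"
  obtains \<rho> c where "\<rho> > 0" "summable (\<lambda>j. homogeneous_coeff_norm c j * \<rho> ^ j)"
    "\<And>h. norm h < \<rho> \<Longrightarrow> (\<lambda>j. homogeneous_part c j h) sums f (a + h)"
proof -
  from assms obtain r c where r: "r > 0"
    and hs: "\<And>x. x \<in> ball a r \<Longrightarrow> ((\<lambda>\<alpha>. c \<alpha> * monomial_at \<alpha> a x) has_sum f x) UNIV"
    unfolding real_analytic_at_def by blast
  define \<rho> where "\<rho> = r / (2 * CARD('n))"
  have \<rho>: "\<rho> > 0" and \<rho>r: "\<rho> * CARD('n) < r"
    using r by (simp_all add: \<rho>_def field_simps)
  have "\<rho> * 1 \<le> \<rho> * CARD('n)" using \<rho> by (intro mult_left_mono) auto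
  then have "\<rho> < r" using \<rho>r by simp
  have ser: "(\<lambda>j. homogeneous_part c j h) sums f (a + h)" if "norm h < r" for h
    using hs[of "a + h"] that by (intro sums_homogeneous_parts) (simp add: dist_norm monomial_at_shift)
  \<comment> \<open>The majorant comes from absolute convergence at the corner \<open>(\<rho>, \<dots>, \<rho>)\<close> of the cube.\<close>
  define p where "p = ((\<chi> i. \<rho>) :: real^'n)"
  have "norm p < r" using norm_const_vec_le[of \<rho>, where 'n='n] \<rho> \<rho>r by (simp add: p_def)
  then have "(\<lambda>\<alpha>. c \<alpha> * monomial_at \<alpha> 0 p) summable_on UNIV"
    using hs[of "a + p"] by (simp add: dist_norm monomial_at_shift has_sum_imp_summable)
  then have "(\<lambda>\<alpha>. norm (c \<alpha> * monomial_at \<alpha> 0 p)) summable_on UNIV"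
    by (rule summable_on_iff_abs_summable_on_real[THEN iffD1])
  then have "((\<lambda>\<alpha>. \<bar>c \<alpha>\<bar> * monomial_at \<alpha> 0 p)
      has_sum (infsum (\<lambda>\<alpha>. norm (c \<alpha> * monomial_at \<alpha> 0 p)) UNIV)) UNIV"
    using \<rho> by (simp add: p_def monomial_at_const_vec abs_mult has_sum_infsum)
  then have "summable (\<lambda>j. homogeneous_part (\<lambda>\<alpha>. \<bar>c \<alpha>\<bar>) j p)"
    by (rule sums_summable[OF sums_homogeneous_parts])
  then have "summable (\<lambda>j. homogeneous_coeff_norm c j * \<rho> ^ j)"
    unfolding p_def using homogeneous_part_abs_const_vec[of \<rho> c] \<rho> by simp
  then show ?thesis
    using that \<rho> ser \<open>\<rho> < r\<close> by (meson less_trans)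
qed

lemma homogeneous_expansion_centre:
  assumes "\<rho> > 0" and "\<And>h. norm h < \<rho> \<Longrightarrow> (\<lambda>j. homogeneous_part c j h) sums f (a + h)"
  shows "homogeneous_part c 0 h = f a"
proof -
  have "(\<lambda>j. homogeneous_part c j 0) = (\<lambda>j. if j = 0 then homogeneous_part c j 0 else 0)"
    by (rule ext) (simp add: homogeneous_part_zero)
  then have "(\<lambda>j. if j = 0 then homogeneous_part c j 0 else 0) sums f a"
    using assms(2)[of 0] assms(1) by simp
  then have "homogeneous_part c 0 0 = f a"
    by (rule sums_unique2[OF sums_single])
  then show ?thesis by (simp add: homogeneous_part_degree_zero[of c h])
qed

lemma real_le_two_power: "real n \<le> 2 ^ n"
  using less_exp[of n] by (metis less_imp_le numeral_power_eq_of_nat_cancel_iff of_nat_le_iff)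

lemma
  fixes c :: "('n::finite \<Rightarrow> nat) \<Rightarrow> real"
  assumes sb: "summable (\<lambda>j. homogeneous_coeff_norm c j * \<rho> ^ j)" and \<rho>: "\<rho> > 0"
    and h: "norm h \<le> \<rho> / 2"
  shows summable_weighted_coeff_tail:
      "summable (\<lambda>j. real (j+m) * homogeneous_coeff_norm c (j+m) * norm h ^ (j+m))"
    and weighted_coeff_tail_le:
      "(\<Sum>j. real (j+m) * homogeneous_coeff_norm c (j+m) * norm h ^ (j+m))
         \<le> norm h ^ m * (2/\<rho>) ^ m * (\<Sum>j. homogeneous_coeff_norm c j * \<rho> ^ j)"
proof -
  let ?N = "homogeneous_coeff_norm c"
  define g where "g j = norm h ^ m * (2/\<rho>) ^ m * (?N (j+m) * \<rho> ^ (j+m))" for j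
  have sg0: "summable (\<lambda>j. ?N (j+m) * \<rho> ^ (j+m))"
    using summable_ignore_initial_segment[OF sb, of m] by simp
  then have sg: "summable g" unfolding g_def by (rule summable_mult)
  \<comment> \<open>Since \<open>\<parallel>h\<parallel> \<le> \<rho>/2\<close>, the factor \<open>2\<^sup>j\<close> absorbs the weight \<open>j + m\<close>.\<close>
  have le: "real (j+m) * ?N (j+m) * norm h ^ (j+m) \<le> g j" for j
  proof -
    have "norm h ^ j \<le> (\<rho>/2) ^ j" by (intro power_mono) (use h in auto)
    then have "real (j+m) * norm h ^ j \<le> 2 ^ (j+m) * (\<rho>/2) ^ j"
      by (intro mult_mono real_le_two_power) auto
    also have "\<dots> = 2 ^ m * \<rho> ^ j" by (simp add: power_add power_divide)
    finally have k: "real (j+m) * norm h ^ j \<le> 2 ^ m * \<rho> ^ j" .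
    have "real (j+m) * ?N (j+m) * norm h ^ (j+m) = (?N (j+m) * norm h ^ m) * (real (j+m) * norm h ^ j)"
      by (simp add: power_add mult_ac)
    also have "\<dots> \<le> (?N (j+m) * norm h ^ m) * (2 ^ m * \<rho> ^ j)"
      by (intro mult_left_mono k) (simp add: homogeneous_coeff_norm_nonneg)
    also have "\<dots> = g j" using \<rho> by (simp add: g_def power_add power_divide field_simps)
    finally show ?thesis .
  qed
  have nn: "0 \<le> real (j+m) * ?N (j+m) * norm h ^ (j+m)" for j
    by (simp add: homogeneous_coeff_norm_nonneg)
  show s: "summable (\<lambda>j. real (j+m) * ?N (j+m) * norm h ^ (j+m))"
    by (rule summable_comparison_test'[OF sg]) (use le nn in auto)
  have "(\<Sum>j. ?N (j+m) * \<rho> ^ (j+m)) \<le> (\<Sum>j. ?N j * \<rho> ^ j)"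
  proof -
    have "(\<Sum>j. ?N j * \<rho> ^ j) = (\<Sum>j. ?N (j+m) * \<rho> ^ (j+m)) + (\<Sum>j<m. ?N j * \<rho> ^ j)"
      by (rule suminf_split_initial_segment[OF sb])
    moreover have "(\<Sum>j<m. ?N j * \<rho> ^ j) \<ge> 0"
      using \<rho> by (intro sum_nonneg) (simp add: homogeneous_coeff_norm_nonneg)
    ultimately show ?thesis by simp
  qed
  then have "suminf g \<le> norm h ^ m * (2/\<rho>) ^ m * (\<Sum>j. ?N j * \<rho> ^ j)"
    unfolding g_def suminf_mult[OF sg0] using \<rho> by (intro mult_left_mono) auto
  with suminf_le[OF le s sg]
  show "(\<Sum>j. real (j+m) * ?N (j+m) * norm h ^ (j+m)) \<le> norm h ^ m * (2/\<rho>) ^ m * (\<Sum>j. ?N j * \<rho> ^ j)"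
    by linarith
qed

lemma homogeneous_tail_le:
  fixes c :: "('n::finite \<Rightarrow> nat) \<Rightarrow> real"
  assumes sb: "summable (\<lambda>j. homogeneous_coeff_norm c j * \<rho> ^ j)" and \<rho>: "\<rho> > 0"
    and h: "norm h \<le> \<rho> / 2"
    and S: "(\<lambda>j. w j * homogeneous_part c (j+m) h) sums S" and w: "\<And>j. \<bar>w j\<bar> \<le> real (j+m)"
  shows "\<bar>S\<bar> \<le> norm h ^ m * (2/\<rho>) ^ m * (\<Sum>j. homogeneous_coeff_norm c j * \<rho> ^ j)"
proof -
  have "\<bar>S\<bar> \<le> (\<Sum>j. real (j+m) * homogeneous_coeff_norm c (j+m) * norm h ^ (j+m))"
  proof (rule norm_sums_le[OF S summable_sums[OF summable_weighted_coeff_tail[OF sb \<rho> h]],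
        unfolded real_norm_def])
    fix j
    have "\<bar>w j * homogeneous_part c (j+m) h\<bar> = \<bar>w j\<bar> * \<bar>homogeneous_part c (j+m) h\<bar>"
      by (simp add: abs_mult)
    also have "\<dots> \<le> real (j+m) * (homogeneous_coeff_norm c (j+m) * norm h ^ (j+m))"
      by (intro mult_mono w abs_homogeneous_part_le) auto
    finally show "\<bar>w j * homogeneous_part c (j+m) h\<bar>
        \<le> real (j+m) * homogeneous_coeff_norm c (j+m) * norm h ^ (j+m)"
      by (simp add: mult_ac)
  qed
  also have "\<dots> \<le> norm h ^ m * (2/\<rho>) ^ m * (\<Sum>j. homogeneous_coeff_norm c j * \<rho> ^ j)"
    by (rule weighted_coeff_tail_le[OF sb \<rho> h])
  finally show ?thesis .
qed

lemma has_derivative_at_of_quadratic_remainder: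
  fixes f :: "'a::real_normed_vector \<Rightarrow> 'b::real_normed_vector"
  assumes "bounded_linear L" and "r > 0" and "C \<ge> 0"
    and rem: "\<And>h. norm h \<le> r \<Longrightarrow> norm (f (a + h) - f a - L h) \<le> C * norm h ^ 2"
  shows "(f has_derivative L) (at a)"
  unfolding has_derivative_at_alt
proof (intro conjI allI impI assms(1))
  fix e :: real assume e: "e > 0"
  define d where "d = min r (e / (C + 1))"
  have "norm (f y - f a - L (y - a)) \<le> e * norm (y - a)" if y: "norm (y - a) < d" for y
  proof -
    have "norm (y - a) \<le> r" "norm (y - a) < e / (C + 1)" using y by (simp_all add: d_def)
    then have "norm (y - a) * (C + 1) < e" using \<open>C \<ge> 0\<close> by (simp add: pos_less_divide_eq)
    moreover have "norm (y - a) * (C + 1) = C * norm (y - a) + norm (y - a)"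
      by (simp add: algebra_simps)
    ultimately have "C * norm (y - a) \<le> e" using norm_ge_zero[of "y - a"] by linarith
    have "norm (f y - f a - L (y - a)) \<le> C * norm (y - a) ^ 2"
      using rem[of "y - a"] \<open>norm (y - a) \<le> r\<close> by simp
    also have "\<dots> = norm (y - a) * (C * norm (y - a))" by (simp add: power2_eq_square)
    also have "\<dots> \<le> norm (y - a) * e" using \<open>C * norm (y - a) \<le> e\<close> by (simp add: mult_left_mono)
    finally show ?thesis by (simp add: mult.commute)
  qed
  moreover have "d > 0" using e \<open>r > 0\<close> \<open>C \<ge> 0\<close> by (simp add: d_def)
  ultimately show "\<exists>d>0. \<forall>y. norm (y - a) < d \<longrightarrow> norm (f y - f a - L (y - a)) \<le> e * norm (y - a)"
    by blast
qed

lemma real_analytic_at_differentiable: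
  fixes f :: "real^'n::finite \<Rightarrow> real"
  assumes "real_analytic_at f a"
  shows "f differentiable (at a)"
proof -
  obtain \<rho> c where \<rho>: "\<rho> > 0" and sb: "summable (\<lambda>j. homogeneous_coeff_norm c j * \<rho> ^ j)"
    and ser: "\<And>h. norm h < \<rho> \<Longrightarrow> (\<lambda>j. homogeneous_part c j h) sums f (a + h)"
    using real_analytic_at_homogeneous_expansion[OF assms] by blast
  define C where "C = (2/\<rho>)^2 * (\<Sum>j. homogeneous_coeff_norm c j * \<rho> ^ j)"
  have "C \<ge> 0"
    unfolding C_def using \<rho> sb by (simp add: suminf_nonneg homogeneous_coeff_norm_nonneg)
  have "norm (f (a + h) - f a - homogeneous_part c 1 h) \<le> C * norm h ^ 2" if h: "norm h \<le> \<rho>/2" for h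
  proof -
    have "(\<lambda>j. 1 * homogeneous_part c (j+2) h) sums (f (a + h) - f a - homogeneous_part c 1 h)"
      using sums_split_initial_segment[OF ser[of h], of 2] h \<rho>
        homogeneous_expansion_centre[OF \<rho> ser, of h]
      by (simp add: numeral_2_eq_2 diff_diff_eq)
    from homogeneous_tail_le[OF sb \<rho> h this] show ?thesis by (simp add: C_def mult_ac)
  qed
  then have "(f has_derivative homogeneous_part c 1) (at a)"
    using \<rho> \<open>C \<ge> 0\<close> bounded_linear_homogeneous_part_one
    by (intro has_derivative_at_of_quadratic_remainder[where r="\<rho>/2"]) auto
  then show ?thesis unfolding differentiable_def by blast
qed

lemma frechet_derivative_eq_grad_inner:
  fixes f :: "real^'n::finite \<Rightarrow> real"
  assumes "f differentiable (at x)"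
  shows "frechet_derivative f (at x) v = grad f x \<bullet> v"
proof -
  let ?L = "frechet_derivative f (at x)"
  have lin: "linear ?L"
    using assms[unfolded frechet_derivative_works] by (rule has_derivative_linear)
  have "?L v = ?L (\<Sum>i\<in>UNIV. (v$i) *\<^sub>R axis i 1)"
    using basis_expansion[of v] by (simp add: scalar_mult_eq_scaleR)
  also have "\<dots> = (\<Sum>i\<in>UNIV. (v$i) * ?L (axis i 1))"
    by (simp add: linear_sum[OF lin] linear_scale[OF lin])
  also have "\<dots> = grad f x \<bullet> v"
    by (simp add: grad_def inner_vec_def mult.commute)
  finally show ?thesis .
qed

text \<open>Euler's identity, obtained by differentiating \<open>t \<mapsto> \<Sum>\<^sub>j t\<^sup>j P\<^sub>j(x) = f(t x)\<close> at \<open>t = 1\<close>.\<close>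

lemma sums_radial_derivative:
  fixes f :: "real^'n::finite \<Rightarrow> real"
  assumes \<rho>: "\<rho> > 0"
    and ser: "\<And>h. norm h < \<rho> \<Longrightarrow> (\<lambda>j. homogeneous_part c j h) sums f h"
    and x: "norm x \<le> \<rho>/2" and diff: "f differentiable (at x)"
  shows "(\<lambda>j. real (Suc j) * homogeneous_part c (Suc j) x) sums (grad f x \<bullet> x)"
proof -
  let ?L = "frechet_derivative f (at x)"
  define a where "a j = homogeneous_part c j x" for j
  have st: "(\<lambda>j. a j * t ^ j) sums f (t *\<^sub>R x)" if t: "norm t < 2" for t :: real
  proof -
    have "\<bar>t\<bar> * norm x \<le> \<bar>t\<bar> * (\<rho>/2)" by (intro mult_left_mono x) auto
    also have "\<dots> < 2 * (\<rho>/2)" using t \<rho> by (intro mult_strict_right_mono) auto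
    finally show ?thesis
      using ser[of "t *\<^sub>R x"] by (simp add: a_def homogeneous_part_scaleR mult.commute)
  qed
  have sm: "summable (\<lambda>j. a j * t ^ j)" if "norm t < 2" for t :: real
    using st[OF that] by (rule sums_summable)
  have "DERIV (\<lambda>t. \<Sum>j. a j * t ^ j) 1 :> (\<Sum>j. diffs a j * 1 ^ j)"
    by (rule termdiffs_strong[of a "3/2" 1]) (use sm[of "3/2"] in auto)
  then have d1: "DERIV (\<lambda>t. f (t *\<^sub>R x)) 1 :> (\<Sum>j. diffs a j * 1 ^ j)"
    by (rule has_field_derivative_transform_within_open[of _ _ _ "ball 0 2"])
      (auto intro: sums_unique[OF st, symmetric])
  have L: "(f has_derivative ?L) (at ((\<lambda>t::real. t *\<^sub>R x) 1))"
    using diff[unfolded frechet_derivative_works] by simp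
  have "((\<lambda>t::real. t *\<^sub>R x) has_derivative (\<lambda>t. t *\<^sub>R x)) (at 1)"
    by (auto intro!: derivative_eq_intros)
  from has_derivative_compose[OF this L]
  have "((\<lambda>t. f (t *\<^sub>R x)) has_derivative (\<lambda>t. ?L x * t)) (at 1)"
    using linear_scale[OF has_derivative_linear[OF L]] by (simp add: mult.commute)
  then have "DERIV (\<lambda>t. f (t *\<^sub>R x)) 1 :> grad f x \<bullet> x"
    by (simp add: has_field_derivative_def frechet_derivative_eq_grad_inner[OF diff])
  with d1 have "(\<Sum>j. diffs a j * 1 ^ j) = grad f x \<bullet> x"
    by (rule DERIV_unique)
  moreover have "summable (\<lambda>j. diffs a j * 1 ^ j)"
    by (rule termdiff_converges[of 1 2]) (use sm in auto)
  ultimately have "(\<lambda>j. diffs a j * 1 ^ j) sums (grad f x \<bullet> x)"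
    by (metis summable_sums)
  then show ?thesis by (simp add: diffs_def a_def)
qed

lemma homogeneous_expansion_lowest_degree:
  assumes \<rho>: "\<rho> > 0"
    and ser: "\<And>h. norm h < \<rho> \<Longrightarrow> (\<lambda>j. homogeneous_part c j h) sums f h"
    and "f 0 = 0" and "norm x\<^sub>0 < \<rho>" and "f x\<^sub>0 \<noteq> 0"
  obtains K \<omega> where "K > 0" "\<And>j x. j < K \<Longrightarrow> homogeneous_part c j x = 0"
    "homogeneous_part c K \<omega> \<noteq> 0"
proof -
  let ?P = "homogeneous_part c"
  have ex: "\<exists>j x. ?P j x \<noteq> 0"
  proof (rule ccontr)
    assume "\<not> ?thesis"
    then have "(\<lambda>j. 0) sums f x\<^sub>0" using ser[OF \<open>norm x\<^sub>0 < \<rho>\<close>] by simp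
    with \<open>f x\<^sub>0 \<noteq> 0\<close> show False using sums_zero sums_unique2 by metis
  qed
  define K where "K = (LEAST j. \<exists>x. ?P j x \<noteq> 0)"
  have PK: "\<exists>x. ?P K x \<noteq> 0" unfolding K_def by (rule LeastI_ex[OF ex])
  have lower: "?P j x = 0" if "j < K" for j x
    using not_less_Least[OF that[unfolded K_def]] by auto
  have "?P 0 x = 0" for x
    using homogeneous_expansion_centre[of \<rho> c f 0] ser \<rho> \<open>f 0 = 0\<close> by simp
  then have "K > 0" using PK by (cases K) auto
  with lower PK show ?thesis using that by blast
qed

lemma
  fixes f :: "real^'n::finite \<Rightarrow> real"
  assumes \<rho>: "\<rho> > 0" and sb: "summable (\<lambda>j. homogeneous_coeff_norm c j * \<rho> ^ j)"
    and ser: "\<And>h. norm h < \<rho> \<Longrightarrow> (\<lambda>j. homogeneous_part c j h) sums f h"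
    and lower: "\<And>j x. j < K \<Longrightarrow> homogeneous_part c j x = 0"
    and x: "norm x \<le> \<rho>/2"
  defines "C \<equiv> (2/\<rho>) ^ (K+1) * (\<Sum>j. homogeneous_coeff_norm c j * \<rho> ^ j)"
  shows leading_term_remainder: "\<bar>f x - homogeneous_part c K x\<bar> \<le> C * norm x ^ (K+1)"
    and leading_term_radial_remainder:
      "f differentiable (at x) \<Longrightarrow>
         \<bar>grad f x \<bullet> x - real K * homogeneous_part c K x\<bar> \<le> C * norm x ^ (K+1)"
proof -
  let ?P = "homogeneous_part c"
  have "norm x < \<rho>" using x \<rho> by linarith
  have "(\<Sum>i<Suc K. ?P i x) = ?P K x" using lower by simp
  then have "(\<lambda>j. 1 * ?P (j + (K+1)) x) sums (f x - ?P K x)"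
    using sums_split_initial_segment[OF ser[OF \<open>norm x < \<rho>\<close>], of "K+1"] by simp
  from homogeneous_tail_le[OF sb \<rho> x this]
  show "\<bar>f x - ?P K x\<bar> \<le> C * norm x ^ (K+1)" by (simp add: C_def mult_ac)
  assume diff: "f differentiable (at x)"
  have "(\<Sum>i<K. real (Suc i) * ?P (Suc i) x) = real K * ?P K x"
    using lower by (cases K) simp_all
  then have "(\<lambda>j. real (j + (K+1)) * ?P (j + (K+1)) x) sums (grad f x \<bullet> x - real K * ?P K x)"
    using sums_split_initial_segment[OF sums_radial_derivative[OF \<rho> ser x diff], of K]
    by (simp add: add.commute)
  from homogeneous_tail_le[OF sb \<rho> x this]
  show "\<bar>grad f x \<bullet> x - real K * ?P K x\<bar> \<le> C * norm x ^ (K+1)" by (simp add: C_def mult_ac)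
qed

lemma leading_term_ratio_lower_bound:
  fixes F L P G s q m B e K :: real
  assumes "s > 0" "q > 0" "m > 0" "K \<ge> 1"
    and "\<bar>F - P\<bar> \<le> e" "\<bar>L - K * P\<bar> \<le> e" "e \<le> m * q / 2"
    and "m * q < \<bar>P\<bar>" "\<bar>P\<bar> \<le> B * q" "\<bar>L\<bar> \<le> G * s"
  shows "m / (2 * (B + m)) / s \<le> G / \<bar>F\<bar>"
proof -
  have "\<bar>P\<bar> \<le> \<bar>K * P\<bar>" using \<open>K \<ge> 1\<close> by (simp add: abs_mult mult_le_cancel_right1)
  moreover have "\<bar>K * P\<bar> - \<bar>L\<bar> \<le> \<bar>L - K * P\<bar>"
    using abs_triangle_ineq2[of "K * P" L] by (simp add: abs_minus_commute)
  ultimately have "m * q / 2 < G * s" using assms by linarith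
  then have G: "m * q / (2 * s) \<le> G" using \<open>s > 0\<close> by (simp add: field_simps)
  moreover have "0 < m * q / (2 * s)" using assms by simp
  ultimately have "0 \<le> G" by linarith
  have "\<bar>P\<bar> - \<bar>F\<bar> \<le> \<bar>F - P\<bar>" "\<bar>F\<bar> - \<bar>P\<bar> \<le> \<bar>F - P\<bar>"
    using abs_triangle_ineq2[of P F] abs_triangle_ineq2[of F P] by (simp_all add: abs_minus_commute)
  then have F: "0 < \<bar>F\<bar>" "\<bar>F\<bar> \<le> (B + m) * q"
    using assms by (linarith, simp add: algebra_simps)
  have "m / (2 * (B + m)) / s = (m * q / (2 * s)) / ((B + m) * q)"
    using \<open>q > 0\<close> by simp
  also have "\<dots> \<le> G / \<bar>F\<bar>"
    using G F \<open>0 \<le> G\<close> by (intro frac_le) auto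
  finally show ?thesis .
qed

lemma log_gradient_ge_inverse_norm:
  fixes f :: "real^'n::finite \<Rightarrow> real"
  assumes \<rho>: "\<rho> > 0" and sb: "summable (\<lambda>j. homogeneous_coeff_norm c j * \<rho> ^ j)"
    and ser: "\<And>h. norm h < \<rho> \<Longrightarrow> (\<lambda>j. homogeneous_part c j h) sums f h"
    and lower: "\<And>j x. j < K \<Longrightarrow> homogeneous_part c j x = 0" and "K > 0"
    and "m > 0" and "r > 0" and diff: "\<And>x. norm x < r \<Longrightarrow> f differentiable (at x)"
  obtains \<delta> c\<^sub>0 where "\<delta> > 0" "\<delta> \<le> r" "c\<^sub>0 > 0"
    "\<And>x. 0 < norm x \<Longrightarrow> norm x < \<delta> \<Longrightarrow> m * norm x ^ K < \<bar>homogeneous_part c K x\<bar> \<Longrightarrow>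
       c\<^sub>0 / norm x \<le> norm (grad f x) / \<bar>f x\<bar>"
proof -
  define C where "C = (2/\<rho>) ^ (K+1) * (\<Sum>j. homogeneous_coeff_norm c j * \<rho> ^ j)"
  have "C \<ge> 0"
    unfolding C_def using \<rho> sb by (simp add: suminf_nonneg homogeneous_coeff_norm_nonneg)
  define B where "B = homogeneous_coeff_norm c K"
  have "B \<ge> 0" by (simp add: B_def homogeneous_coeff_norm_nonneg)
  define \<delta> where "\<delta> = min (\<rho>/2) (min r (m / (2 * (C+1))))"
  have "m / (2 * (B + m)) / norm x \<le> norm (grad f x) / \<bar>f x\<bar>"
    if x: "0 < norm x" "norm x < \<delta>" "m * norm x ^ K < \<bar>homogeneous_part c K x\<bar>" for x
  proof -
    have "norm x \<le> \<rho>/2" "norm x < r" using x by (simp_all add: \<delta>_def)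
    have "norm x * C \<le> m / 2"
    proof -
      have "norm x * (2 * (C+1)) < m" using x \<open>C \<ge> 0\<close> by (simp add: \<delta>_def field_simps)
      moreover have "norm x * (2 * (C+1)) = 2 * (norm x * C) + 2 * norm x"
        by (simp add: algebra_simps)
      ultimately show ?thesis using norm_ge_zero[of x] by linarith
    qed
    then have e: "C * norm x ^ (K+1) \<le> m * norm x ^ K / 2"
      using x by (simp add: mult_left_mono mult_ac)
    show ?thesis
    proof (rule leading_term_ratio_lower_bound[OF x(1) _ \<open>m > 0\<close> _ _ _ e x(3)])
      show "\<bar>f x - homogeneous_part c K x\<bar> \<le> C * norm x ^ (K+1)"
        using leading_term_remainder[OF \<rho> sb ser lower \<open>norm x \<le> \<rho>/2\<close>] by (simp add: C_def)
      show "\<bar>grad f x \<bullet> x - real K * homogeneous_part c K x\<bar> \<le> C * norm x ^ (K+1)"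
        using leading_term_radial_remainder[OF \<rho> sb ser lower \<open>norm x \<le> \<rho>/2\<close> diff]
          \<open>norm x < r\<close> by (simp add: C_def)
      show "\<bar>homogeneous_part c K x\<bar> \<le> B * norm x ^ K"
        by (simp add: B_def abs_homogeneous_part_le)
      show "\<bar>grad f x \<bullet> x\<bar> \<le> norm (grad f x) * norm x" by (rule Cauchy_Schwarz_ineq2)
    qed (use x \<open>K > 0\<close> in auto)
  qed
  moreover have "\<delta> > 0" "\<delta> \<le> r" using \<rho> \<open>r > 0\<close> \<open>m > 0\<close> \<open>C \<ge> 0\<close> by (simp_all add: \<delta>_def)
  moreover have "m / (2 * (B + m)) > 0" using \<open>m > 0\<close> \<open>B \<ge> 0\<close> by simp
  ultimately show ?thesis using that by blast
qed

lemma sets_borel_ball [measurable]: "ball x r \<in> sets borel"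
  by (simp add: borel_open)

lemma borel_measurable_inverse_power_norm [measurable]:
  "(\<lambda>x::'a::real_normed_vector. ennreal (1 / norm x ^ k)) \<in> borel_measurable borel"
  by (intro measurable_compose[OF _ measurable_ennreal] borel_measurable_divide
      borel_measurable_power borel_measurable_norm) simp_all

lemma emeasure_lborel_open_pos:
  fixes A :: "'a::euclidean_space set"
  assumes "open A" "x \<in> A"
  shows "0 < emeasure lborel A"
proof -
  obtain a b where ab: "box a b \<subseteq> A" "x \<in> box a b" "\<forall>i\<in>Basis. a \<bullet> i < b \<bullet> i"
    by (rule open_contains_box[OF assms])
  have "0 < emeasure lborel (box a b)"
    using ab(3) unfolding emeasure_lborel_box_eq
    by (auto simp: inner_diff_left less_imp_le intro!: prod_pos)
  also have "\<dots> \<le> emeasure lborel A"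
    by (rule emeasure_mono[OF ab(1)]) (simp add: assms borel_open)
  finally show ?thesis .
qed

lemma nn_integral_cone_ball_inverse_power_scale:
  fixes Cn :: "(real^'n::finite) set"
  assumes [measurable]: "Cn \<in> sets borel"
    and cone: "\<And>x t. x \<in> Cn \<Longrightarrow> t > 0 \<Longrightarrow> t *\<^sub>R x \<in> Cn" and "t > 0"
  shows "(\<integral>\<^sup>+x. indicator (Cn \<inter> ball 0 r) x * ennreal (1 / norm x ^ CARD('n)) \<partial>lborel)
       = (\<integral>\<^sup>+x. indicator (Cn \<inter> ball 0 (t * r)) x * ennreal (1 / norm x ^ CARD('n)) \<partial>lborel)"
    (is "?I r = ?I (t * r)")
proof -
  let ?n = "CARD('n)"
  let ?g = "\<lambda>x. indicator (Cn \<inter> ball 0 r) x * ennreal (1 / norm x ^ ?n)"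
  have meas: "?g \<in> borel_measurable borel" by measurable
  have "?I r = (\<integral>\<^sup>+x. ?g x
      \<partial>density (distr lborel borel (\<lambda>x. 0 + (1/t) *\<^sub>R x)) (\<lambda>_. \<bar>1/t\<bar> ^ DIM(real^'n)))"
    using \<open>t > 0\<close> by (subst lborel_affine[of "1/t" 0, symmetric]) simp_all
  also have "\<dots> = (\<integral>\<^sup>+x. ennreal ((1/t) ^ ?n) * ?g ((1/t) *\<^sub>R x) \<partial>lborel)"
    using meas \<open>t > 0\<close> by (simp add: nn_integral_density nn_integral_distr)
  also have "\<dots> = ?I (t * r)"
  proof (intro nn_integral_cong)
    fix x :: "real^'n"
    have "((1/t) *\<^sub>R x \<in> Cn) = (x \<in> Cn)"
      using cone[of x "1/t"] cone[of "(1/t) *\<^sub>R x" t] \<open>t > 0\<close> by auto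
    moreover have "((1/t) *\<^sub>R x \<in> ball 0 r) = (x \<in> ball 0 (t * r))"
      using \<open>t > 0\<close> by (simp add: divide_less_eq mult.commute)
    moreover have "(1/t) ^ ?n * (1 / norm ((1/t) *\<^sub>R x) ^ ?n) = 1 / norm x ^ ?n"
      using \<open>t > 0\<close> by (cases "x = 0") (simp_all add: power_divide field_simps)
    ultimately show "ennreal ((1/t) ^ ?n) * ?g ((1/t) *\<^sub>R x)
        = indicator (Cn \<inter> ball 0 (t * r)) x * ennreal (1 / norm x ^ ?n)"
      using \<open>t > 0\<close> by (simp add: indicator_def ennreal_mult'[symmetric])
  qed
  finally show ?thesis .
qed

lemma nn_integral_cone_ball_inverse_power_infinite:
  fixes Cn :: "(real^'n::finite) set"
  assumes "open Cn" and "\<omega> \<in> Cn" and "\<omega> \<noteq> 0"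
    and cone: "\<And>x t. x \<in> Cn \<Longrightarrow> t > 0 \<Longrightarrow> t *\<^sub>R x \<in> Cn" and "\<delta> > 0"
  shows "(\<integral>\<^sup>+x. indicator (Cn \<inter> ball 0 \<delta>) x * ennreal (1 / norm x ^ CARD('n)) \<partial>lborel) = \<infinity>"
proof -
  let ?n = "CARD('n)"
  let ?I = "\<lambda>A. \<integral>\<^sup>+x. indicator A x * ennreal (1 / norm x ^ ?n) \<partial>lborel"
  have [measurable]: "Cn \<in> sets borel" using \<open>open Cn\<close> by (simp add: borel_open)
  define S where "S = Cn \<inter> (ball 0 (2*\<delta>) - ball 0 \<delta>)"
  have [measurable]: "S \<in> sets borel" unfolding S_def by measurable
  have "?I (Cn \<inter> ball 0 (2*\<delta>)) = (\<integral>\<^sup>+x. indicator (Cn \<inter> ball 0 \<delta>) x * ennreal (1 / norm x ^ ?n)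
      + indicator S x * ennreal (1 / norm x ^ ?n) \<partial>lborel)"
  proof (intro nn_integral_cong)
    fix x :: "real^'n"
    have "indicator (Cn \<inter> ball 0 (2*\<delta>)) x = indicator (Cn \<inter> ball 0 \<delta>) x + (indicator S x :: ennreal)"
      using \<open>\<delta> > 0\<close> by (simp add: S_def indicator_def, blast)
    then show "indicator (Cn \<inter> ball 0 (2*\<delta>)) x * ennreal (1 / norm x ^ ?n)
        = indicator (Cn \<inter> ball 0 \<delta>) x * ennreal (1 / norm x ^ ?n) + indicator S x * ennreal (1 / norm x ^ ?n)"
      by (simp add: distrib_right)
  qed
  also have "\<dots> = ?I (Cn \<inter> ball 0 \<delta>) + ?I S"
    by (rule nn_integral_add) measurable
  finally have "?I (Cn \<inter> ball 0 (2*\<delta>)) = ?I (Cn \<inter> ball 0 \<delta>) + ?I S" .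
  with nn_integral_cone_ball_inverse_power_scale[OF \<open>Cn \<in> sets borel\<close> cone, of 2 \<delta>]
  have "?I (Cn \<inter> ball 0 \<delta>) = ?I (Cn \<inter> ball 0 \<delta>) + ?I S" by (simp only: zero_less_numeral)
  then have "?I (Cn \<inter> ball 0 \<delta>) + 0 = ?I (Cn \<inter> ball 0 \<delta>) + ?I S"
    by (subst add_0_right)
  then have "?I (Cn \<inter> ball 0 \<delta>) = \<infinity> \<or> 0 = ?I S"
    by (simp only: ennreal_add_left_cancel)
  \<comment> \<open>The shell \<open>S\<close> contains an open set and \<open>\<parallel>x\<parallel>\<^sup>-\<^sup>n \<ge> (2\<delta>)\<^sup>-\<^sup>n\<close> on it.\<close>
  moreover have "0 < ?I S"
  proof -
    define y where "y = ((3/2) * \<delta> / norm \<omega>) *\<^sub>R \<omega>"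
    have "y \<in> Cn \<inter> (ball 0 (2*\<delta>) - cball 0 \<delta>)"
      using cone[OF \<open>\<omega> \<in> Cn\<close>] \<open>\<omega> \<noteq> 0\<close> \<open>\<delta> > 0\<close> by (simp add: y_def)
    then have "0 < emeasure lborel (Cn \<inter> (ball 0 (2*\<delta>) - cball 0 \<delta>))"
      using \<open>open Cn\<close> by (intro emeasure_lborel_open_pos) auto
    also have "\<dots> \<le> emeasure lborel S"
      by (rule emeasure_mono) (auto simp: S_def)
    finally have "0 < ennreal (1 / (2*\<delta>) ^ ?n) * emeasure lborel S"
      using \<open>\<delta> > 0\<close> by (simp add: ennreal_zero_less_mult_iff)
    also have "\<dots> = (\<integral>\<^sup>+x. indicator S x * ennreal (1 / (2*\<delta>) ^ ?n) \<partial>lborel)"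
      by (subst nn_integral_multc) (simp_all add: mult.commute)
    also have "\<dots> \<le> ?I S"
    proof (intro nn_integral_mono)
      fix x :: "real^'n"
      have "1 / (2*\<delta>) ^ ?n \<le> 1 / norm x ^ ?n" if "\<delta> \<le> norm x" "norm x < 2*\<delta>"
        using that \<open>\<delta> > 0\<close> by (intro divide_left_mono power_mono zero_less_power mult_pos_pos) auto
      then show "indicator S x * ennreal (1 / (2*\<delta>) ^ ?n) \<le> indicator S x * ennreal (1 / norm x ^ ?n)"
        by (auto simp: S_def indicator_def ennreal_leI)
    qed
    finally show ?thesis .
  qed
  ultimately show ?thesis by auto
qed

lemma nn_integral_infinite_if_ge_inverse_norm:
  fixes g :: "real^'n::finite \<Rightarrow> real" and U Cn :: "(real^'n) set"
  assumes "open Cn" and "\<omega> \<in> Cn" and "\<omega> \<noteq> 0"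
    and cone: "\<And>x t. x \<in> Cn \<Longrightarrow> t > 0 \<Longrightarrow> t *\<^sub>R x \<in> Cn"
    and "\<delta> > 0" and "ball 0 \<delta> \<subseteq> U" and "c\<^sub>0 > 0"
    and "\<And>x. g x \<ge> 0"
    and ge: "\<And>x. x \<in> Cn \<Longrightarrow> 0 < norm x \<Longrightarrow> norm x < \<delta> \<Longrightarrow> c\<^sub>0 / norm x \<le> g x"
  shows "(\<integral>\<^sup>+ x\<in>U. ennreal (g x ^ CARD('n)) \<partial>lborel) = \<infinity>"
proof -
  let ?n = "CARD('n)"
  let ?h = "\<lambda>x. indicator (Cn \<inter> ball 0 \<delta>) x * ennreal (1 / norm x ^ ?n)"
  have [measurable]: "Cn \<in> sets borel" using \<open>open Cn\<close> by (simp add: borel_open)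
  have "\<infinity> = ennreal (c\<^sub>0 ^ ?n) * (\<integral>\<^sup>+x. ?h x \<partial>lborel)"
    using nn_integral_cone_ball_inverse_power_infinite[OF assms(1-5)] \<open>c\<^sub>0 > 0\<close>
    by (simp add: ennreal_mult_eq_top_iff)
  also have "\<dots> = (\<integral>\<^sup>+x. ennreal (c\<^sub>0 ^ ?n) * ?h x \<partial>lborel)"
    by (rule nn_integral_cmult[symmetric]) measurable
  also have "\<dots> \<le> (\<integral>\<^sup>+ x\<in>U. ennreal (g x ^ ?n) \<partial>lborel)"
  proof (intro nn_integral_mono)
    fix x :: "real^'n"
    \<comment> \<open>At \<open>x = 0\<close> the left side vanishes, as \<open>1 / 0 = 0\<close>.\<close>
    have "c\<^sub>0 ^ ?n * (1 / norm x ^ ?n) \<le> g x ^ ?n" if "x \<in> Cn" "norm x < \<delta>"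
    proof (cases "x = 0")
      case False
      then have "(c\<^sub>0 / norm x) ^ ?n \<le> g x ^ ?n"
        using ge[OF that(1) _ that(2)] \<open>c\<^sub>0 > 0\<close> by (intro power_mono) auto
      then show ?thesis by (simp add: power_divide)
    next
      case True
      then show ?thesis using \<open>g x \<ge> 0\<close> by (simp add: power_0_left)
    qed
    then show "ennreal (c\<^sub>0 ^ ?n) * ?h x \<le> ennreal (g x ^ ?n) * indicator U x"
      using \<open>ball 0 \<delta> \<subseteq> U\<close> \<open>c\<^sub>0 > 0\<close>
      by (auto simp: indicator_def subset_iff ennreal_mult[symmetric] intro: ennreal_leI)
  qed
  finally show ?thesis by (simp add: top_unique)
qed

theorem theorem3p4:
  fixes f :: "real^'n \<Rightarrow> real" and D U :: "(real^'n) set"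
  assumes "open D" and "0 \<in> D"
    and "real_analytic_on f D"
    and "f 0 = 0"
    and "\<forall>V. open V \<and> 0 \<in> V \<longrightarrow> (\<exists>x\<in>V \<inter> D. f x \<noteq> 0)"
    and "open U" and "0 \<in> U" and "U \<subseteq> D"
  shows "(\<integral>\<^sup>+ x\<in>U. ennreal ((norm (grad f x) / \<bar>f x\<bar>) ^ CARD('n)) \<partial>lborel) = \<infinity>"
proof -
  obtain \<rho> c where \<rho>: "\<rho> > 0" and sb: "summable (\<lambda>j. homogeneous_coeff_norm c j * \<rho> ^ j)"
    and ser: "\<And>h. norm h < \<rho> \<Longrightarrow> (\<lambda>j. homogeneous_part c j h) sums f h"
    using real_analytic_at_homogeneous_expansion[of f 0] assms(2,3)
    by (metis real_analytic_on_def add_0)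
  obtain x\<^sub>0 where "norm x\<^sub>0 < \<rho>" "f x\<^sub>0 \<noteq> 0"
    using assms(5)[rule_format, of "ball 0 \<rho>"] \<rho> by auto
  then obtain K \<omega> where "K > 0" and lower: "\<And>j x. j < K \<Longrightarrow> homogeneous_part c j x = 0"
    and \<omega>: "homogeneous_part c K \<omega> \<noteq> 0"
    using homogeneous_expansion_lowest_degree[OF \<rho> ser \<open>f 0 = 0\<close>] by blast
  have "\<omega> \<noteq> 0" using \<omega> homogeneous_part_zero[OF \<open>K > 0\<close>] by auto
  define m where "m = \<bar>homogeneous_part c K \<omega>\<bar> / norm \<omega> ^ K / 2"
  define Cn where "Cn = {x. m * norm x ^ K < \<bar>homogeneous_part c K x\<bar>}"
  have "m > 0" "\<omega> \<in> Cn" using \<omega> \<open>\<omega> \<noteq> 0\<close> by (simp_all add: Cn_def m_def)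
  have "open Cn"
    unfolding Cn_def by (intro open_Collect_less continuous_intros continuous_on_homogeneous_part)
  have cone: "t *\<^sub>R x \<in> Cn" if "x \<in> Cn" "t > 0" for x t
    using that by (simp add: Cn_def homogeneous_part_scaleR abs_mult power_abs power_mult_distrib)
  obtain r where "r > 0" "ball 0 r \<subseteq> U" using assms(6,7) open_contains_ball by blast
  then have "f differentiable (at x)" if "norm x < r" for x
  proof -
    have "x \<in> D" using that \<open>ball 0 r \<subseteq> U\<close> \<open>U \<subseteq> D\<close> by (auto simp: subset_iff)
    then show ?thesis
      using assms(3) by (intro real_analytic_at_differentiable) (simp add: real_analytic_on_def)
  qed
  then obtain \<delta> c\<^sub>0 where "\<delta> > 0" "\<delta> \<le> r" "c\<^sub>0 > 0"
    and bound: "\<And>x. 0 < norm x \<Longrightarrow> norm x < \<delta> \<Longrightarrow> m * norm x ^ K < \<bar>homogeneous_part c K x\<bar> \<Longrightarrow>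
       c\<^sub>0 / norm x \<le> norm (grad f x) / \<bar>f x\<bar>"
    using log_gradient_ge_inverse_norm[OF \<rho> sb ser lower \<open>K > 0\<close> \<open>m > 0\<close> \<open>r > 0\<close>] by blast
  have "ball 0 \<delta> \<subseteq> U" using \<open>\<delta> \<le> r\<close> \<open>ball 0 r \<subseteq> U\<close> by auto
  from nn_integral_infinite_if_ge_inverse_norm[OF \<open>open Cn\<close> \<open>\<omega> \<in> Cn\<close> \<open>\<omega> \<noteq> 0\<close> cone
      \<open>\<delta> > 0\<close> this \<open>c\<^sub>0 > 0\<close>] bound
  show ?thesis by (simp add: Cn_def)
qed

end
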